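(* Let $f:[0,1]\times[0,1]\to\mathbb{R}$ be convex on the coordinates. Then \begin{align*} &\frac{1}{4}\int_0^1 \Big[f\Big(x,\tfrac{1}{4}\Big) + f\Big(x,\tfrac{3}{4}\Big)\Big]dx + \frac{1}{4}\int_0^1 \Big[f\Big(\tfrac{1}{4},y\Big) + f\Big(\tfrac{3}{4},y\Big)\Big]dy\\ &\leq \int_0^1\int_0^1 f(x, y)\,dx\,dy\\ &\leq \frac{1}{8}\int_0^1 \big[f(x,0) + f(x,1)\big]dx + \frac{1}{8}\int_0^1 \big[f(0,y) + f(1,y)\big]dy +\frac{1}{4}\int_0^1 f\Big(x,\tfrac{1}{2}\Big)dx+\frac{1}{4}\int_0^1 f\Big(\tfrac{1}{2},y\Big)dy. \end{align*}
   Context: A function $f:[a,b]\times[c,d]\to\mathbb{R}$ is called convex on the coordinates if for every $y\in[c,d]$ the partial map $u\mapsto f(u,y)$ is convex on $[a,b]$, and for every $x\in[a,b]$ the partial map $v\mapsto f(x,v)$ is convex on $[c,d]$. *)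

theory Defs
  imports "HOL-Analysis.Analysis"
begin

definition convex_on_coordinates ::
  "real \<Rightarrow> real \<Rightarrow> real \<Rightarrow> real \<Rightarrow> (real \<Rightarrow> real \<Rightarrow> real) \<Rightarrow> bool" where
  "convex_on_coordinates a b c d f \<longleftrightarrow>
     (\<forall>y\<in>{c..d}. convex_on {a..b} (\<lambda>u. f u y)) \<and>
     (\<forall>x\<in>{a..b}. convex_on {c..d} (\<lambda>v. f x v))"

end

theory Submission
  imports Defs
begin

text \<open>Integrating the coordinatewise convex function in one variable gives a convex function
  of the other, and integrating pointwise inequalities preserves them. So it suffices to apply
  the Hermite--Hadamard inequalities, on each half of the interval, to \<open>y \<mapsto> \<integral> f(x,y) dx\<close>
  and to the partial maps \<open>u \<mapsto> f(u,y)\<close>, and to average the two resulting estimates.\<close>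

lemma convex_on_midpoint_le_reflect:
  fixes g :: "real \<Rightarrow> real"
  assumes "convex_on {a..b} g" "x \<in> {a..b}"
  shows "2 * g ((a + b) / 2) \<le> g x + g (a + b - x)"
proof -
  have mid: "(1 - 1/2) *\<^sub>R x + (1/2) *\<^sub>R (a + b - x) = (a + b) / 2"
    by (simp add: field_simps)
  have "g ((a + b) / 2) \<le> (1 - 1/2) * g x + (1/2) * g (a + b - x)"
    using convex_onD[OF assms(1), of "1/2" x "a + b - x"] assms(2) unfolding mid by auto
  then show ?thesis by simp
qed

lemma convex_on_reflect_le_endpoints:
  fixes g :: "real \<Rightarrow> real"
  assumes "convex_on {a..b} g" "x \<in> {a..b}"
  shows "g x + g (a + b - x) \<le> g a + g b"
proof (cases "a < b")
  case True
  have "g x \<le> (g b - g a) / (b - a) * (x - a) + g a"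
    using convex_onD_Icc'[OF assms] by simp
  moreover have "g (a + b - x) \<le> (g b - g a) / (b - a) * (b - x) + g a"
    using convex_onD_Icc'[OF assms(1), of "a + b - x"] assms(2) by simp
  moreover have "(g b - g a) / (b - a) * (x - a) + (g b - g a) / (b - a) * (b - x)
      = (g b - g a) / (b - a) * (b - a)"
    by (simp only: distrib_left [symmetric]) simp
  moreover have "(g b - g a) / (b - a) * (b - a) = g b - g a"
    using True by simp
  ultimately show ?thesis by linarith
next
  case False
  with assms(2) have "x = a" "b = a" by auto
  then show ?thesis by simp
qed

lemma convex_on_abs_le_Icc:
  fixes g :: "real \<Rightarrow> real"
  assumes "convex_on {a..b} g" "x \<in> {a..b}"
  shows "\<bar>g x\<bar> \<le> \<bar>2 * g ((a + b) / 2)\<bar> + \<bar>g a\<bar> + \<bar>g b\<bar>"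
proof -
  have "a + b - x \<in> {a..b}" using assms(2) by auto
  then have "g x \<le> max (g a) (g b)" "g (a + b - x) \<le> max (g a) (g b)"
    using convex_on_le_max[OF assms(1)] assms(2) by auto
  with convex_on_midpoint_le_reflect[OF assms] show ?thesis by linarith
qed

lemma convex_on_integrable_Icc:
  fixes g :: "real \<Rightarrow> real"
  assumes "convex_on {a..b} g"
  shows "g integrable_on {a..b}"
proof -
  \<comment> \<open>\<open>g\<close> may jump at the endpoints; it is continuous inside and bounded by the previous lemma.\<close>
  have "continuous_on {a<..<b} g"
    by (rule convex_on_continuous) (auto intro: convex_on_subset[OF assms])
  then have "g \<in> borel_measurable (lebesgue_on {a<..<b})"
    by (rule continuous_imp_measurable_on_sets_lebesgue) auto
  then have "g integrable_on {a<..<b}"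
    by (rule measurable_bounded_by_integrable_imp_integrable_real)
       (auto simp: integrable_on_open_interval_real intro!: convex_on_abs_le_Icc[OF assms])
  then show ?thesis by (simp add: integrable_on_open_interval_real)
qed

lemma has_integral_reflect_Icc:
  fixes g :: "real \<Rightarrow> real"
  assumes "g integrable_on {a..b}" "a \<le> b"
  shows "((\<lambda>x. g (a + b - x)) has_integral integral {a..b} g) {a..b}"
proof -
  have "(g has_integral integral {a..b} g) (cbox a b)"
    using assms(1) by (simp add: integrable_integral)
  from has_integral_affinity[OF this, of "-1" "a + b"]
  have "((\<lambda>x. g (- x + (a + b))) has_integral integral {a..b} g) ((\<lambda>x. - x + (a + b)) ` {a..b})"
    by simp
  moreover have "(\<lambda>x. - x + (a + b)) ` {a..b} = {a..b}"
    using image_affinity_atLeastAtMost[of "-1" "a + b" a b] assms(2) by simp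
  ultimately show ?thesis by (simp add: algebra_simps)
qed

lemma hermite_hadamard:
  fixes g :: "real \<Rightarrow> real"
  assumes g: "convex_on {a..b} g" and "a \<le> b"
  shows "(b - a) * g ((a + b) / 2) \<le> integral {a..b} g"
    and "integral {a..b} g \<le> (b - a) * (g a + g b) / 2"
proof -
  have int: "g integrable_on {a..b}"
    using g by (rule convex_on_integrable_Icc)
  have sym: "((\<lambda>x. g x + g (a + b - x)) has_integral 2 * integral {a..b} g) {a..b}"
    using has_integral_add[OF integrable_integral[OF int] has_integral_reflect_Icc[OF int \<open>a \<le> b\<close>]]
    by simp
  have "((\<lambda>x. 2 * g ((a + b) / 2)) has_integral (b - a) * (2 * g ((a + b) / 2))) {a..b}"
    using has_integral_const_real[of "2 * g ((a + b) / 2)" a b] \<open>a \<le> b\<close> by simp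
  from has_integral_le[OF this sym] convex_on_midpoint_le_reflect[OF g]
  show "(b - a) * g ((a + b) / 2) \<le> integral {a..b} g" by simp
  have "((\<lambda>x. g a + g b) has_integral (b - a) * (g a + g b)) {a..b}"
    using has_integral_const_real[of "g a + g b" a b] \<open>a \<le> b\<close> by simp
  from has_integral_le[OF sym this] convex_on_reflect_le_endpoints[OF g]
  show "integral {a..b} g \<le> (b - a) * (g a + g b) / 2" by simp
qed

lemma hermite_hadamard_bisected:
  fixes g :: "real \<Rightarrow> real"
  assumes g: "convex_on {a..b} g" and "a \<le> b"
  shows "(b - a) / 2 * (g ((3 * a + b) / 4) + g ((a + 3 * b) / 4)) \<le> integral {a..b} g"
    and "integral {a..b} g \<le> (b - a) / 4 * (g a + g b) + (b - a) / 2 * g ((a + b) / 2)"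
proof -
  define m where "m = (a + b) / 2"
  have am: "a \<le> m" and mb: "m \<le> b" using \<open>a \<le> b\<close> by (auto simp: m_def)
  have left: "convex_on {a..m} g" and right: "convex_on {m..b} g"
    using am mb by (auto intro: convex_on_subset[OF g])
  have split: "integral {a..m} g + integral {m..b} g = integral {a..b} g"
    using Henstock_Kurzweil_Integration.integral_combine[OF am mb convex_on_integrable_Icc[OF g]] .
  have quarters: "(a + m) / 2 = (3 * a + b) / 4" "(m + b) / 2 = (a + 3 * b) / 4"
    and halves: "m - a = (b - a) / 2" "b - m = (b - a) / 2"
    by (simp_all add: m_def field_simps)
  show "(b - a) / 2 * (g ((3 * a + b) / 4) + g ((a + 3 * b) / 4)) \<le> integral {a..b} g"
    using hermite_hadamard(1)[OF left am] hermite_hadamard(1)[OF right mb] split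
    unfolding quarters halves by (simp add: distrib_left)
  have "integral {a..b} g \<le> (b - a) * (g a + g m) / 4 + (b - a) * (g m + g b) / 4"
    using hermite_hadamard(2)[OF left am] hermite_hadamard(2)[OF right mb] split
    unfolding halves by simp
  then show "integral {a..b} g \<le> (b - a) / 4 * (g a + g b) + (b - a) / 2 * g ((a + b) / 2)"
    unfolding m_def by (simp add: field_simps)
qed

lemma convex_on_integral_parametric:
  fixes f :: "'a::euclidean_space \<Rightarrow> 'b::real_vector \<Rightarrow> real"
  assumes "convex S"
    and int: "\<And>y. y \<in> S \<Longrightarrow> (\<lambda>x. f x y) integrable_on I"
    and conv: "\<And>x. x \<in> I \<Longrightarrow> convex_on S (f x)"
  shows "convex_on S (\<lambda>y. integral I (\<lambda>x. f x y))"
proof (rule convex_onI[OF _ \<open>convex S\<close>])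
  fix t :: real and y1 y2
  assume t: "0 < t" "t < 1" and y: "y1 \<in> S" "y2 \<in> S"
  have "(1 - t) *\<^sub>R y1 + t *\<^sub>R y2 \<in> S"
    using convexD[OF \<open>convex S\<close> y] t by simp
  moreover have int1: "(\<lambda>x. (1 - t) * f x y1) integrable_on I"
    and int2: "(\<lambda>x. t * f x y2) integrable_on I"
    using int y by (auto intro: integrable_on_mult_right)
  ultimately have "integral I (\<lambda>x. f x ((1 - t) *\<^sub>R y1 + t *\<^sub>R y2))
      \<le> integral I (\<lambda>x. (1 - t) * f x y1 + t * f x y2)"
    using convex_onD[OF conv, of _ t y1 y2] t y
    by (intro integral_le int integrable_add) auto
  also have "\<dots> = (1 - t) * integral I (\<lambda>x. f x y1) + t * integral I (\<lambda>x. f x y2)"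
    using int1 int2 by (simp add: integral_add)
  finally show "integral I (\<lambda>x. f x ((1 - t) *\<^sub>R y1 + t *\<^sub>R y2))
      \<le> (1 - t) * integral I (\<lambda>x. f x y1) + t * integral I (\<lambda>x. f x y2)" .
qed

theorem corollary1:
  fixes f :: "real \<Rightarrow> real \<Rightarrow> real"
  assumes "convex_on_coordinates 0 1 0 1 f"
  shows "(1/4) * integral {0..1} (\<lambda>x. f x (1/4) + f x (3/4))
           + (1/4) * integral {0..1} (\<lambda>y. f (1/4) y + f (3/4) y)
         \<le> integral {0..1} (\<lambda>y. integral {0..1} (\<lambda>x. f x y))
       \<and> integral {0..1} (\<lambda>y. integral {0..1} (\<lambda>x. f x y))
         \<le> (1/8) * integral {0..1} (\<lambda>x. f x 0 + f x 1)
           + (1/8) * integral {0..1} (\<lambda>y. f 0 y + f 1 y)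
           + (1/4) * integral {0..1} (\<lambda>x. f x (1/2))
           + (1/4) * integral {0..1} (\<lambda>y. f (1/2) y)"
proof -
  have conv_x: "\<And>y. y \<in> {0..1} \<Longrightarrow> convex_on {0..1} (\<lambda>u. f u y)"
    and conv_y: "\<And>x. x \<in> {0..1} \<Longrightarrow> convex_on {0..1} (f x)"
    using assms unfolding convex_on_coordinates_def by auto
  note int_x = convex_on_integrable_Icc[OF conv_x] and int_y = convex_on_integrable_Icc[OF conv_y]
  define F where "F y = integral {0..1} (\<lambda>x. f x y)" for y
  have F_convex: "convex_on {0..1} F"
    unfolding F_def by (rule convex_on_integral_parametric) (auto intro: int_x conv_y)
  note F_int = convex_on_integrable_Icc[OF F_convex, unfolded F_def]
  from hermite_hadamard_bisected[OF F_convex] have outer: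
    "(F (1/4) + F (3/4)) / 2 \<le> integral {0..1} F"
    "integral {0..1} F \<le> (F 0 + F 1) / 4 + F (1/2) / 2"
    by simp_all
  have inner_lower: "integral {0..1} (\<lambda>y. (1/2) * (f (1/4) y + f (3/4) y)) \<le> integral {0..1} F"
    using hermite_hadamard_bisected(1)[OF conv_x] unfolding F_def
    by (intro integral_le integrable_on_mult_right integrable_add int_y F_int) simp_all
  have inner_upper: "integral {0..1} F
      \<le> integral {0..1} (\<lambda>y. (1/4) * (f 0 y + f 1 y) + (1/2) * f (1/2) y)"
    using hermite_hadamard_bisected(2)[OF conv_x] unfolding F_def
    by (intro integral_le integrable_on_mult_right integrable_add int_y F_int) simp_all
  have "integral {0..1} (\<lambda>y. integral {0..1} (\<lambda>x. f x y)) = integral {0..1} F"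
    unfolding F_def ..
  then show ?thesis
    using outer inner_lower inner_upper
    by (simp add: F_def integral_add integrable_add integrable_on_mult_right int_x int_y)
       (simp add: field_simps)
qed

end
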